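(* Let $(X,\tau)$ be a zero-dimensional, perfect, compact $T_1$-space and let $(Y,\tau_d)$ be a dendrite with metric $d$. Then there exists a continuous, closed map $f$ of $X$ onto $Y$ such that the decomposition $\mathcal D_f=\{f^{-1}(y);\, y\in Y\}$ of $X$ is upper semicontinuous and the map $h:(Y,\tau_d)\to(\mathcal D_f,\tau(\mathcal D_f))$, $y\mapsto f^{-1}(y)$, is a homeomorphism. Consequently the decomposition space $(\mathcal D_f,\tau(\mathcal D_f))$ is metrizable by the metric $\rho(D,D')=d(h^{-1}(D),h^{-1}(D'))$ (i.e. $\tau(\mathcal D_f)=\tau_\rho$), and $(\mathcal D_f,\tau_\rho)$ is a dendrite.
   Context: A space is zero-dimensional if it has a base consisting of sets that are both closed and open (clopen). A space is perfect if it has no isolated points. A dendrite is a locally connected, connected, compact metric space containing no simple closed curve (no subspace homeomorphic to a circle). A decomposition $\mathcal D$ of a set $X$ is a collection of nonempty, pairwise disjoint subsets of $X$ whose union is $X$; for a topological space $(X,\tau)$ the decomposition topology is $\tau(\mathcal D)=\{\mathcal U\subset\mathcal D;\ \bigcup_{D\in\mathcal U}D\in\tau\}$, and $(\mathcal D,\tau(\mathcal D))$ is the decomposition space. A decomposition $\mathcal D$ is upper semicontinuous (usc) if for every $D\in\mathcal D$ and every open $U\supseteq D$ there is an open $u\supseteq D$ such that every $A\in\mathcal D$ with $A\cap u\neq\emptyset$ satisfies $A\subset U$. *)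

theory Defs
  imports "HOL-Analysis.Analysis"
begin

definition zero_dimensional_space :: "'a topology \<Rightarrow> bool" where
  "zero_dimensional_space X \<longleftrightarrow>
     (\<forall>U x. openin X U \<and> x \<in> U \<longrightarrow>
        (\<exists>V. openin X V \<and> closedin X V \<and> x \<in> V \<and> V \<subseteq> U))"

definition perfect_top_space :: "'a topology \<Rightarrow> bool" where
  "perfect_top_space X \<longleftrightarrow> (\<forall>x \<in> topspace X. \<not> openin X {x})"

definition dendrite :: "'b set \<Rightarrow> ('b \<Rightarrow> 'b \<Rightarrow> real) \<Rightarrow> bool" where
  "dendrite M d \<longleftrightarrow> Metric_space M d \<and> M \<noteq> {} \<and>
     locally_connected_space (Metric_space.mtopology M d) \<and>
     connected_space (Metric_space.mtopology M d) \<and>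
     compact_space (Metric_space.mtopology M d) \<and>
     \<not> (\<exists>S \<subseteq> M. subtopology (Metric_space.mtopology M d) S homeomorphic_space
                    top_of_set (sphere (0::complex) 1))"

definition decomposition :: "'a set \<Rightarrow> 'a set set \<Rightarrow> bool" where
  "decomposition S D \<longleftrightarrow> (\<forall>A\<in>D. A \<noteq> {}) \<and> pairwise disjnt D \<and> \<Union>D = S"

definition decomp_topology :: "'a topology \<Rightarrow> 'a set set \<Rightarrow> 'a set topology" where
  "decomp_topology X D = topology (\<lambda>U. U \<subseteq> D \<and> openin X (\<Union>U))"

definition usc_decomposition :: "'a topology \<Rightarrow> 'a set set \<Rightarrow> bool" where
  "usc_decomposition X D \<longleftrightarrow>
     (\<forall>A\<in>D. \<forall>U. openin X U \<and> A \<subseteq> U \<longrightarrow>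
        (\<exists>u. openin X u \<and> A \<subseteq> u \<and> (\<forall>B\<in>D. B \<inter> u \<noteq> {} \<longrightarrow> B \<subseteq> U)))"

lemma openin_decomp_topology:
  assumes "decomposition (topspace X) D"
  shows "openin (decomp_topology X D) U \<longleftrightarrow> U \<subseteq> D \<and> openin X (\<Union>U)"
proof -
  have "istopology (\<lambda>U. U \<subseteq> D \<and> openin X (\<Union>U))"
    unfolding istopology_def
  proof (rule conjI; intro allI impI)
    fix S T assume S: "S \<subseteq> D \<and> openin X (\<Union>S)" and T: "T \<subseteq> D \<and> openin X (\<Union>T)"
    have eq: "\<Union>(S \<inter> T) = \<Union>S \<inter> \<Union>T"
    proof
      show "\<Union>S \<inter> \<Union>T \<subseteq> \<Union>(S \<inter> T)"
      proof
        fix x assume "x \<in> \<Union>S \<inter> \<Union>T"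
        then obtain A B where "A \<in> S" "B \<in> T" "x \<in> A" "x \<in> B" by blast
        have "A \<in> D" "B \<in> D" using S T \<open>A \<in> S\<close> \<open>B \<in> T\<close> by auto
        with assms \<open>x \<in> A\<close> \<open>x \<in> B\<close> have "A = B"
          unfolding decomposition_def pairwise_def disjnt_def by blast
        with \<open>A \<in> S\<close> \<open>B \<in> T\<close> \<open>x \<in> A\<close> show "x \<in> \<Union>(S \<inter> T)" by blast
      qed
    qed blast
    have "openin X (\<Union>S \<inter> \<Union>T)" using S T by (intro openin_Int) auto
    then show "S \<inter> T \<subseteq> D \<and> openin X (\<Union>(S \<inter> T))" using S by (simp only: eq) blast
  next
    fix K assume "\<forall>S\<in>K. S \<subseteq> D \<and> openin X (\<Union>S)"
    show "\<Union>K \<subseteq> D \<and> openin X (\<Union>(\<Union>K))"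
    proof
      show "\<Union>K \<subseteq> D" using \<open>\<forall>S\<in>K. S \<subseteq> D \<and> openin X (\<Union>S)\<close> by blast
      have "\<Union>(\<Union>K) = \<Union>((\<lambda>S. \<Union>S) ` K)" by blast
      moreover have "openin X (\<Union>((\<lambda>S. \<Union>S) ` K))"
        using \<open>\<forall>S\<in>K. S \<subseteq> D \<and> openin X (\<Union>S)\<close> by (intro openin_Union) blast
      ultimately show "openin X (\<Union>(\<Union>K))" by simp
    qed
  qed
  then show ?thesis unfolding decomp_topology_def by simp
qed

end

theory Submission
  imports Defs "HOL-Library.Product_Order"
begin

(* A continuous surjection f of X onto the compact metric space M is built by a Cantor
   scheme.  A cell is a pair (U, K) of a nonempty clopen U \<subseteq> X and a nonempty closed
   K \<subseteq> M; pairs are ordered componentwise.  We choose partitions L 0, L 1, ... of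
   (topspace X, M) into cells whose K-parts have diameter at most (1/2)^n, each refining
   the previous one.  Refining is possible because in a zero-dimensional perfect T1 space
   every nonempty clopen set splits into any prescribed finite number of clopen pieces, which
   we match with a finite cover of K by small closed balls.  The K-parts of the cells
   containing a point x shrink to one point f x; f is continuous as the U-parts are open,
   and onto by compactness of X.
   As M is Hausdorff and X compact, f is closed, hence a quotient map.  For such maps the
   fibres form an upper semicontinuous decomposition and y \<mapsto> f -` {y} is a
   homeomorphism onto the decomposition space.  Transporting d along this bijection yields an
   isometric copy of M, whose topology therefore equals the decomposition topology; finally,
   being a dendrite is a topological invariant. *)

definition clopen_partition :: "'a topology \<Rightarrow> 'a set \<Rightarrow> 'a set set \<Rightarrow> bool" where
  "clopen_partition X P \<P> \<longleftrightarrow> finite \<P> \<and> pairwise disjnt \<P> \<and> \<Union>\<P> = P \<and>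
     (\<forall>A\<in>\<P>. A \<noteq> {} \<and> openin X A \<and> closedin X A)"

(* In a zero-dimensional perfect T1 space a nonempty clopen set contains two distinct
   points, and a clopen neighbourhood of one avoiding the other splits it in two. *)
lemma clopen_split:
  assumes zd: "zero_dimensional_space X" and pf: "perfect_top_space X" and t1: "t1_space X"
    and P: "P \<noteq> {}" "openin X P" "closedin X P"
  obtains A B where "A \<noteq> {}" "B \<noteq> {}" "disjnt A B" "A \<union> B = P"
    "openin X A" "closedin X A" "openin X B" "closedin X B"
proof -
  obtain x where x: "x \<in> P" using P by blast
  have xX: "x \<in> topspace X" using x P openin_subset by blast
  have "P \<noteq> {x}" using pf xX P(2) unfolding perfect_top_space_def by auto
  then obtain y where y: "y \<in> P" "y \<noteq> x" using x by blast
  have yX: "y \<in> topspace X" using y P openin_subset by blast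
  obtain U where U: "openin X U" "x \<in> U" "y \<notin> U"
    using t1 xX yX y unfolding t1_space_def by metis
  obtain A where A: "openin X A" "closedin X A" "x \<in> A" "A \<subseteq> U \<inter> P"
    using zd U P x unfolding zero_dimensional_space_def by (meson IntI openin_Int)
  show thesis
  proof
    show "openin X (P - A)" "closedin X (P - A)"
      using A P by (auto intro: openin_diff closedin_diff)
  qed (use A x y U in \<open>auto simp: disjnt_def\<close>)
qed

lemma clopen_partition_card:
  assumes zd: "zero_dimensional_space X" and pf: "perfect_top_space X" and t1: "t1_space X"
    and P: "P \<noteq> {}" "openin X P" "closedin X P" and n: "n \<ge> 1"
  shows "\<exists>\<P>. clopen_partition X P \<P> \<and> card \<P> = n"
  using n
proof (induction n rule: dec_induct)
  case base
  show ?case using P by (intro exI[of _ "{P}"]) (simp add: clopen_partition_def)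
next
  case (step n)
  then obtain \<P> where \<P>: "clopen_partition X P \<P>" "card \<P> = n" by blast
  then obtain A0 where A0: "A0 \<in> \<P>" using step.hyps by fastforce
  then have "A0 \<noteq> {}" "openin X A0" "closedin X A0"
    using \<P> unfolding clopen_partition_def by auto
  then obtain A B where AB: "A \<noteq> {}" "B \<noteq> {}" "disjnt A B" "A \<union> B = A0"
    "openin X A" "closedin X A" "openin X B" "closedin X B"
    using clopen_split[OF zd pf t1] by metis
  define \<Q> where "\<Q> = \<P> - {A0}"
  have fin: "finite \<Q>" using \<P> unfolding clopen_partition_def \<Q>_def by simp
  have disj: "disjnt C A0" if "C \<in> \<Q>" for C
    using \<P> A0 that unfolding clopen_partition_def \<Q>_def pairwise_def by blast
  have notin: "A \<notin> \<Q>" "B \<notin> \<Q>" "A \<noteq> B"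
    using disj AB by (fastforce simp: disjnt_def)+
  have \<Q>: "pairwise disjnt \<Q>" "\<Union>\<Q> \<union> A0 = P" "\<forall>C\<in>\<Q>. C \<noteq> {} \<and> openin X C \<and> closedin X C"
    using \<P> A0 unfolding clopen_partition_def \<Q>_def by (auto simp: pairwise_def)
  have "pairwise disjnt (insert A (insert B \<Q>))"
    using \<Q>(1) disj AB(3,4) notin(3) unfolding pairwise_insert
    by (metis Un_upper1 Un_upper2 disjnt_subset2 disjnt_sym insertE)
  then have "clopen_partition X P (insert A (insert B \<Q>))"
    using \<Q>(2,3) AB fin unfolding clopen_partition_def by auto
  moreover have "card (insert A (insert B \<Q>)) = Suc n"
    using fin notin \<P> A0 step.hyps unfolding \<Q>_def
    by (simp add: card_Diff_singleton clopen_partition_def)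
  ultimately show ?case by blast
qed

lemma clopen_partition_indexed:
  assumes zd: "zero_dimensional_space X" and pf: "perfect_top_space X" and t1: "t1_space X"
    and P: "P \<noteq> {}" "openin X P" "closedin X P" and C: "finite C" "C \<noteq> {}"
  obtains g where "\<And>c. c \<in> C \<Longrightarrow> g c \<noteq> {} \<and> openin X (g c) \<and> closedin X (g c)"
    "pairwise (\<lambda>c c'. disjnt (g c) (g c')) C" "(\<Union>c\<in>C. g c) = P"
proof -
  have "card C \<ge> 1" using C by (simp add: Suc_leI card_gt_0_iff)
  then obtain \<P> where \<P>: "clopen_partition X P \<P>" "card \<P> = card C"
    using clopen_partition_card[OF zd pf t1 P] by blast
  then obtain g where g: "bij_betw g C \<P>"
    using C(1) finite_same_card_bij unfolding clopen_partition_def by metis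
  show thesis
  proof
    show "g c \<noteq> {} \<and> openin X (g c) \<and> closedin X (g c)" if "c \<in> C" for c
      using \<P>(1) bij_betwE[OF g] that unfolding clopen_partition_def by blast
    show "pairwise (\<lambda>c c'. disjnt (g c) (g c')) C"
      using \<P>(1) bij_betwE[OF g] inj_onD[OF bij_betw_imp_inj_on[OF g]]
      unfolding clopen_partition_def pairwise_def by metis
    show "(\<Union>c\<in>C. g c) = P"
      using \<P>(1) bij_betw_imp_surj_on[OF g] unfolding clopen_partition_def by simp
  qed
qed

context Metric_space
begin

definition is_cell :: "'x topology \<Rightarrow> 'x set \<times> 'a set \<Rightarrow> bool" where
  "is_cell X q \<longleftrightarrow> fst q \<noteq> {} \<and> openin X (fst q) \<and> closedin X (fst q) \<and>
     snd q \<noteq> {} \<and> closedin mtopology (snd q)"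

definition cell_fine :: "real \<Rightarrow> 'x set \<times> 'a set \<Rightarrow> bool" where
  "cell_fine \<epsilon> q \<longleftrightarrow> (\<forall>y\<in>snd q. \<forall>z\<in>snd q. d y z \<le> \<epsilon>)"

(* S partitions the cell p: its members are subcells of p (componentwise order on pairs),
   their clopen parts are pairwise disjoint and cover that of p, their closed parts cover
   that of p.  A partition of (topspace X, M) partitions X and covers M simultaneously. *)
definition cell_partition :: "'x topology \<Rightarrow> 'x set \<times> 'a set \<Rightarrow> ('x set \<times> 'a set) set \<Rightarrow> bool" where
  "cell_partition X p S \<longleftrightarrow> (\<forall>q\<in>S. is_cell X q \<and> q \<le> p) \<and>
     pairwise (\<lambda>q q'. disjnt (fst q) (fst q')) S \<and> \<Union>(fst ` S) = fst p \<and> \<Union>(snd ` S) = snd p"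

(* Every cell can be partitioned into \<epsilon>-fine cells: cover K by finitely many closed
   (\<epsilon>/2)-balls around points of K and give each ball its own piece of a clopen partition of U. *)
lemma cell_split:
  assumes zd: "zero_dimensional_space X" and pf: "perfect_top_space X" and t1: "t1_space X"
    and cM: "compact_space mtopology" and p: "is_cell X p" and \<epsilon>: "\<epsilon> > 0"
  shows "\<exists>S. cell_partition X p S \<and> (\<forall>q\<in>S. cell_fine \<epsilon> q)"
proof -
  obtain P K where pPK: "p = (P, K)" by fastforce
  have P: "P \<noteq> {}" "openin X P" "closedin X P" and K: "K \<noteq> {}" "closedin mtopology K"
    using p unfolding is_cell_def pPK by auto
  have "mtotally_bounded K"
    using closedin_compact_space[OF cM K(2)] by (rule compactin_imp_mtotally_bounded)
  then obtain C where C: "finite C" "C \<subseteq> K" "K \<subseteq> (\<Union>c\<in>C. mball c (\<epsilon>/2))"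
    unfolding mtotally_bounded_def using \<epsilon> by (meson half_gt_zero)
  have CM: "C \<subseteq> M" using C(2) K(2) closedin_subset by fastforce
  have "C \<noteq> {}" using C K by auto
  then obtain g where g: "\<And>c. c \<in> C \<Longrightarrow> g c \<noteq> {} \<and> openin X (g c) \<and> closedin X (g c)"
    "pairwise (\<lambda>c c'. disjnt (g c) (g c')) C" "(\<Union>c\<in>C. g c) = P"
    using clopen_partition_indexed[OF zd pf t1 P C(1)] by metis
  define S where "S = (\<lambda>c. (g c, K \<inter> mcball c (\<epsilon>/2))) ` C"
  have "cell_partition X p S"
    unfolding cell_partition_def
  proof (intro conjI)
    show "\<forall>q\<in>S. is_cell X q \<and> q \<le> p"
      using g(1,3) C(2) CM K \<epsilon> unfolding S_def is_cell_def pPK by (fastforce intro!: closedin_Int)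
    show "pairwise (\<lambda>q q'. disjnt (fst q) (fst q')) S"
      using g(2) unfolding S_def pairwise_def by fastforce
    show "\<Union>(fst ` S) = fst p"
      using g(3) unfolding S_def pPK by (simp add: image_image)
    show "\<Union>(snd ` S) = snd p"
      using C(3) unfolding S_def pPK by fastforce
  qed
  moreover have "cell_fine \<epsilon> q" if q: "q \<in> S" for q
    unfolding cell_fine_def
  proof (intro ballI)
    fix y z assume "y \<in> snd q" "z \<in> snd q"
    then obtain c where "c \<in> M" "y \<in> mcball c (\<epsilon>/2)" "z \<in> mcball c (\<epsilon>/2)"
      using q CM unfolding S_def by auto
    then show "d y z \<le> \<epsilon>"
      using triangle[of y c z] commute[of y c] by simp
  qed
  ultimately show ?thesis by blast
qed

definition cell_refines :: "('x set \<times> 'a set) set \<Rightarrow> ('x set \<times> 'a set) set \<Rightarrow> bool" where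
  "cell_refines L' L \<longleftrightarrow> (\<forall>q\<in>L'. \<exists>p\<in>L. q \<le> p) \<and> (\<forall>p\<in>L. \<forall>y\<in>snd p. \<exists>q\<in>L'. q \<le> p \<and> y \<in> snd q)"

lemma cell_partition_Union:
  assumes L: "cell_partition X p L" and S: "\<And>q. q \<in> L \<Longrightarrow> cell_partition X q (S q)"
  shows "cell_partition X p (\<Union>q\<in>L. S q)" "cell_refines (\<Union>q\<in>L. S q) L"
proof -
  have sub: "r \<le> q" if "q \<in> L" "r \<in> S q" for q r
    using S that unfolding cell_partition_def by blast
  have disj: "disjnt (fst r) (fst r')"
    if q: "q \<in> L" "q' \<in> L" "r \<in> S q" "r' \<in> S q'" and "r \<noteq> r'" for q q' r r'
  proof (cases "q = q'")
    case True
    then show ?thesis using S q \<open>r \<noteq> r'\<close> unfolding cell_partition_def pairwise_def by blast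
  next
    case False
    then have "disjnt (fst q) (fst q')" using L q unfolding cell_partition_def pairwise_def by blast
    then show ?thesis using sub q by (meson disjnt_subset1 disjnt_subset2 less_eq_prod_def)
  qed
  show "cell_partition X p (\<Union>q\<in>L. S q)"
    unfolding cell_partition_def
  proof (intro conjI)
    show "\<forall>r\<in>\<Union>(S ` L). is_cell X r \<and> r \<le> p"
      using S L unfolding cell_partition_def by (meson UN_E order_trans)
    show "pairwise (\<lambda>r r'. disjnt (fst r) (fst r')) (\<Union>(S ` L))"
      unfolding pairwise_def using disj by blast
    have "\<Union>(fst ` (\<Union>q\<in>L. S q)) = (\<Union>q\<in>L. \<Union>(fst ` S q))"
      "\<Union>(snd ` (\<Union>q\<in>L. S q)) = (\<Union>q\<in>L. \<Union>(snd ` S q))"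
      by blast+
    then show "\<Union>(fst ` (\<Union>q\<in>L. S q)) = fst p" "\<Union>(snd ` (\<Union>q\<in>L. S q)) = snd p"
      using S L unfolding cell_partition_def by simp_all
  qed
  have "\<exists>r\<in>\<Union>(S ` L). r \<le> q \<and> y \<in> snd r" if "q \<in> L" "y \<in> snd q" for q y
  proof -
    have "y \<in> \<Union>(snd ` S q)" using S that unfolding cell_partition_def by simp
    then show ?thesis using sub that by blast
  qed
  then show "cell_refines (\<Union>q\<in>L. S q) L"
    unfolding cell_refines_def using sub by blast
qed

lemma refine_partition:
  assumes zd: "zero_dimensional_space X" and pf: "perfect_top_space X" and t1: "t1_space X"
    and cM: "compact_space mtopology" and L: "cell_partition X p L" and \<epsilon>: "\<epsilon> > 0"
  shows "\<exists>L'. cell_partition X p L' \<and> (\<forall>q\<in>L'. cell_fine \<epsilon> q) \<and> cell_refines L' L"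
proof -
  have "\<forall>q\<in>L. \<exists>S. cell_partition X q S \<and> (\<forall>r\<in>S. cell_fine \<epsilon> r)"
    using cell_split[OF zd pf t1 cM _ \<epsilon>] L unfolding cell_partition_def by blast
  then obtain S where S: "\<And>q. q \<in> L \<Longrightarrow> cell_partition X q (S q) \<and> (\<forall>r\<in>S q. cell_fine \<epsilon> r)"
    by metis
  then show ?thesis
    using cell_partition_Union[OF L, of S] by blast
qed

lemma fine_partition_sequence:
  assumes zd: "zero_dimensional_space X" and pf: "perfect_top_space X" and t1: "t1_space X"
    and cM: "compact_space mtopology" and X: "topspace X \<noteq> {}" and M: "M \<noteq> {}"
  obtains L where "\<And>n. cell_partition X (topspace X, M) (L n)"
    "\<And>n q. q \<in> L n \<Longrightarrow> cell_fine ((1/2)^n) q" "\<And>n. cell_refines (L (Suc n)) (L n)"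
proof -
  define P where "P n L \<longleftrightarrow> cell_partition X (topspace X, M) L \<and> (\<forall>q\<in>L. cell_fine ((1/2)^n) q)"
    for n L
  have "\<exists>L. \<forall>n. P n (L n) \<and> cell_refines (L (Suc n)) (L n)"
  proof (rule dependent_nat_choice)
    have "cell_partition X (topspace X, M) {(topspace X, M)}"
      using X M unfolding cell_partition_def is_cell_def by auto
    then show "\<exists>L. P 0 L"
      using refine_partition[OF zd pf t1 cM _ zero_less_one] unfolding P_def by fastforce
  next
    fix L n assume "P n L"
    then show "\<exists>L'. P (Suc n) L' \<and> cell_refines L' L"
      using refine_partition[OF zd pf t1 cM, of _ _ "(1/2)^Suc n"] unfolding P_def by fastforce
  qed
  then show thesis using that unfolding P_def by blast
qed

end

definition cell_at :: "('x set \<times> 'b) set \<Rightarrow> 'x \<Rightarrow> 'x set \<times> 'b" where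
  "cell_at L x = (THE q. q \<in> L \<and> x \<in> fst q)"

lemma cell_at_eq:
  assumes "pairwise (\<lambda>q q'. disjnt (fst q) (fst q')) L" "q \<in> L" "x \<in> fst q"
  shows "cell_at L x = q"
  unfolding cell_at_def
proof (rule the_equality)
  show "q' = q" if "q' \<in> L \<and> x \<in> fst q'" for q'
    using assms that unfolding pairwise_def disjnt_def by blast
qed (use assms in blast)

locale refining_cells = Metric_space M d for M :: "'a set" and d +
  fixes X :: "'x topology" and L :: "nat \<Rightarrow> ('x set \<times> 'a set) set"
  assumes compact_X: "compact_space X" and compact_M: "compact_space mtopology"
    and partition: "\<And>n. cell_partition X (topspace X, M) (L n)"
    and fine: "\<And>n q. q \<in> L n \<Longrightarrow> cell_fine ((1/2)^n) q"
    and refines: "\<And>n. cell_refines (L (Suc n)) (L n)"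
begin

abbreviation cell :: "nat \<Rightarrow> 'x \<Rightarrow> 'x set \<times> 'a set" where
  "cell n \<equiv> cell_at (L n)"

lemma cell_eq: "q \<in> L n \<Longrightarrow> x \<in> fst q \<Longrightarrow> cell n x = q"
  using partition[of n] unfolding cell_partition_def by (intro cell_at_eq) auto

lemma cell:
  assumes "x \<in> topspace X"
  shows "cell n x \<in> L n" "x \<in> fst (cell n x)" "is_cell X (cell n x)"
proof -
  have "x \<in> \<Union>(fst ` L n)"
    using partition[of n] assms unfolding cell_partition_def by simp
  then obtain q where "q \<in> L n" "x \<in> fst q" by blast
  then show "cell n x \<in> L n" "x \<in> fst (cell n x)" "is_cell X (cell n x)"
    using cell_eq partition[of n] unfolding cell_partition_def by auto
qed

lemma cell_Suc_le:
  assumes "x \<in> topspace X"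
  shows "cell (Suc n) x \<le> cell n x"
proof -
  obtain p where p: "p \<in> L n" "cell (Suc n) x \<le> p"
    using refines[of n] cell(1)[OF assms] unfolding cell_refines_def by blast
  then have "x \<in> fst p" using cell(2)[OF assms] by (auto simp: less_eq_prod_def)
  then show ?thesis using p cell_eq by simp
qed

definition point :: "'x \<Rightarrow> 'a" where
  "point x = the_elem (\<Inter>n. snd (cell n x))"

lemma cell_subset: "x \<in> topspace X \<Longrightarrow> snd (cell n x) \<subseteq> M"
  using cell(3) closedin_subset unfolding is_cell_def by fastforce

(* This intersection is a singleton: a decreasing sequence of nonempty closed sets with
   diameters tending to 0 in the complete space M. *)
lemma nest_point:
  assumes x: "x \<in> topspace X"
  shows "(\<Inter>n. snd (cell n x)) = {point x}"
proof -
  have closed: "closedin mtopology (snd (cell n x))" and ne: "snd (cell n x) \<noteq> {}" for n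
    using cell(3)[OF x] unfolding is_cell_def by auto
  have dec: "decseq (\<lambda>n. snd (cell n x))"
    using cell_Suc_le[OF x] by (simp add: decseq_Suc_iff less_eq_prod_def)
  have small: "\<exists>n a. snd (cell n x) \<subseteq> mcball a \<epsilon>" if \<epsilon>: "\<epsilon> > 0" for \<epsilon>
  proof -
    obtain n where n: "(1/2)^n < \<epsilon>" using real_arch_pow_inv[of \<epsilon> "1/2"] \<epsilon> by auto
    obtain a where a: "a \<in> snd (cell n x)" using ne by blast
    have "d a z \<le> (1/2)^n" if "z \<in> snd (cell n x)" for z
      using fine[OF cell(1)[OF x]] a that unfolding cell_fine_def by blast
    then have "snd (cell n x) \<subseteq> mcball a \<epsilon>"
      using n a cell_subset[OF x] by (auto simp: subset_iff intro: order_trans[OF _ less_imp_le])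
    then show ?thesis by blast
  qed
  have "\<exists>l. l \<in> M \<and> (\<Inter>n. snd (cell n x)) = {l}"
    by (rule mcomplete_nest_sing[THEN iffD1, OF compact_space_imp_mcomplete[OF compact_M], rule_format])
      (use closed ne dec small in blast)
  then show ?thesis unfolding point_def by force
qed

lemma point_in_cell: "x \<in> topspace X \<Longrightarrow> point x \<in> snd (cell n x)"
  using nest_point by blast

(* All points of the open set fst (cell n x) have images within (1/2)^n of point x. *)
lemma continuous_point: "continuous_map X mtopology point"
  unfolding continuous_map_to_metric
proof (intro ballI allI impI)
  fix x and \<epsilon> :: real assume x: "x \<in> topspace X" and "\<epsilon> > 0"
  then obtain n where n: "(1/2::real)^n < \<epsilon>" using real_arch_pow_inv[of \<epsilon> "1/2"] by auto
  let ?U = "fst (cell n x)"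
  have U: "openin X ?U" "x \<in> ?U" using cell[OF x] unfolding is_cell_def by auto
  have "point x' \<in> mball (point x) \<epsilon>" if x': "x' \<in> ?U" for x'
  proof -
    have x'X: "x' \<in> topspace X" using U x' openin_subset by blast
    have "cell n x' = cell n x" using cell_eq cell(1)[OF x] x' by blast
    then have "point x' \<in> snd (cell n x)" using point_in_cell[OF x'X] by metis
    then have "d (point x) (point x') \<le> (1/2)^n"
      using fine[OF cell(1)[OF x]] point_in_cell[OF x] unfolding cell_fine_def by blast
    then show ?thesis
      using n \<open>point x' \<in> snd (cell n x)\<close> point_in_cell[OF x] cell_subset[OF x] by auto
  qed
  then show "\<exists>U. openin X U \<and> x \<in> U \<and> (\<forall>x'\<in>U. point x' \<in> mball (point x) \<epsilon>)"
    using U by blast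
qed

(* For y in M choose a chain of cells whose closed parts contain y; by compactness of X
   their clopen parts have a common point x, and then point x = y. *)
lemma point_onto: "point ` topspace X = M"
proof
  show "point ` topspace X \<subseteq> M"
    using point_in_cell cell_subset by blast
  show "M \<subseteq> point ` topspace X"
  proof
    fix y assume "y \<in> M"
    have "\<exists>p. \<forall>n. (p n \<in> L n \<and> y \<in> snd (p n)) \<and> p (Suc n) \<le> p n"
    proof (rule dependent_nat_choice)
      have "y \<in> \<Union>(snd ` L 0)"
        using partition[of 0] \<open>y \<in> M\<close> unfolding cell_partition_def by simp
      then show "\<exists>p. p \<in> L 0 \<and> y \<in> snd p" by blast
      show "\<exists>q. (q \<in> L (Suc n) \<and> y \<in> snd q) \<and> q \<le> p" if "p \<in> L n \<and> y \<in> snd p" for p n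
        using refines[of n] that unfolding cell_refines_def by blast
    qed
    then obtain p where p: "\<And>n. p n \<in> L n" "\<And>n. y \<in> snd (p n)" "\<And>n. p (Suc n) \<le> p n"
      by blast
    have "(\<Inter>n. fst (p n)) \<noteq> {}"
    proof (rule compact_space_imp_nest[OF compact_X])
      show "closedin X (fst (p n))" "fst (p n) \<noteq> {}" for n
        using partition[of n] p(1) unfolding cell_partition_def is_cell_def by auto
      show "decseq (\<lambda>n. fst (p n))"
        using p(3) by (simp add: decseq_Suc_iff less_eq_prod_def)
    qed
    then obtain x where x: "\<And>n. x \<in> fst (p n)" by blast
    then have "x \<in> topspace X"
      using partition[of 0] p(1)[of 0] unfolding cell_partition_def fst_conv by blast
    moreover have "cell n x = p n" for n using cell_eq p(1) x by blast
    then have "y \<in> (\<Inter>n. snd (cell n x))" using p(2) by simp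
    ultimately show "y \<in> point ` topspace X" using nest_point by blast
  qed
qed

end

lemma (in Metric_space) continuous_surjection_onto:
  assumes zd: "zero_dimensional_space X" and pf: "perfect_top_space X" and t1: "t1_space X"
    and cX: "compact_space X" and X: "topspace X \<noteq> {}"
    and cM: "compact_space mtopology" and M: "M \<noteq> {}"
  obtains f where "continuous_map X mtopology f" "f ` topspace X = M"
proof -
  obtain L where "\<And>n. cell_partition X (topspace X, M) (L n)"
    "\<And>n q. q \<in> L n \<Longrightarrow> cell_fine ((1/2)^n) q" "\<And>n. cell_refines (L (Suc n)) (L n)"
    using fine_partition_sequence[OF zd pf t1 cM X M] by blast
  then interpret refining_cells M d X L
    using cX cM by unfold_locales
  show thesis using that continuous_point point_onto .
qed

definition fibre :: "'a topology \<Rightarrow> ('a \<Rightarrow> 'b) \<Rightarrow> 'b \<Rightarrow> 'a set" where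
  "fibre X f y = {x \<in> topspace X. f x = y}"

lemma Union_fibres: "\<Union>(fibre X f ` V) = {x \<in> topspace X. f x \<in> V}"
  unfolding fibre_def by blast

lemma decomposition_fibres:
  assumes "f ` topspace X = topspace Y"
  shows "decomposition (topspace X) (fibre X f ` topspace Y)"
  unfolding decomposition_def
proof (intro conjI)
  show "\<forall>A\<in>fibre X f ` topspace Y. A \<noteq> {}"
  proof
    fix A assume "A \<in> fibre X f ` topspace Y"
    then obtain y where "y \<in> topspace Y" "A = fibre X f y" by blast
    moreover obtain x where "x \<in> topspace X" "f x = y"
      using assms \<open>y \<in> topspace Y\<close> by (metis imageE)
    ultimately show "A \<noteq> {}" unfolding fibre_def by blast
  qed
  show "pairwise disjnt (fibre X f ` topspace Y)"
    unfolding pairwise_def disjnt_def fibre_def by auto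
  show "\<Union>(fibre X f ` topspace Y) = topspace X"
    using assms unfolding fibre_def by auto
qed

lemma inj_on_fibre:
  assumes "f ` topspace X = topspace Y"
  shows "inj_on (fibre X f) (topspace Y)"
proof (rule inj_onI)
  fix y z assume "y \<in> topspace Y" "z \<in> topspace Y" "fibre X f y = fibre X f z"
  moreover obtain x where "x \<in> topspace X" "f x = y"
    using assms \<open>y \<in> topspace Y\<close> by (metis imageE)
  ultimately show "y = z" unfolding fibre_def by blast
qed

lemma topspace_decomp_topology:
  assumes "decomposition (topspace X) D"
  shows "topspace (decomp_topology X D) = D"
proof
  show "topspace (decomp_topology X D) \<subseteq> D"
    using openin_decomp_topology[OF assms] openin_topspace by blast
  have "\<Union>D = topspace X" using assms unfolding decomposition_def by blast
  then show "D \<subseteq> topspace (decomp_topology X D)"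
    using openin_decomp_topology[OF assms, of D] openin_subset by fastforce
qed

(* For a quotient map, y \<mapsto> fibre X f y is a homeomorphism of Y onto the
   decomposition space of the fibres: a set of fibres is open iff its union is open in X,
   i.e. iff the corresponding set of points of Y is open. *)
lemma homeomorphic_map_fibre:
  assumes q: "quotient_map X Y f"
  shows "homeomorphic_map Y (decomp_topology X (fibre X f ` topspace Y)) (fibre X f)"
proof -
  let ?D = "fibre X f ` topspace Y"
  have onto: "f ` topspace X = topspace Y" using q by (rule quotient_imp_surjective_map)
  have dec: "decomposition (topspace X) ?D" using decomposition_fibres[OF onto] .
  have "openin Y {y \<in> topspace Y. fibre X f y \<in> V} \<longleftrightarrow> openin (decomp_topology X ?D) V"
    if "V \<subseteq> ?D" for V
  proof -
    define W where "W = {y \<in> topspace Y. fibre X f y \<in> V}"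
    have "V = fibre X f ` W" using that unfolding W_def by blast
    then have "\<Union>V = {x \<in> topspace X. f x \<in> W}" by (simp add: Union_fibres)
    moreover have "W \<subseteq> topspace Y" unfolding W_def by blast
    then have "openin X {x \<in> topspace X. f x \<in> W} \<longleftrightarrow> openin Y W"
      using q unfolding quotient_map_def by (simp only: mem_Collect_eq)
    ultimately show ?thesis
      unfolding openin_decomp_topology[OF dec] W_def[symmetric] using that by simp
  qed
  then show ?thesis
    unfolding homeomorphic_map_def quotient_map_def topspace_decomp_topology[OF dec]
    using inj_on_fibre[OF onto] by blast
qed

(* The fibres of a closed continuous surjection form an upper semicontinuous
   decomposition: a fibre inside the open set U lies in the saturated open set of fibres
   over Y - f ` (X - U). *)
lemma usc_decomposition_fibres:
  assumes cont: "continuous_map X Y f" and closed: "closed_map X Y f"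
    and onto: "f ` topspace X = topspace Y"
  shows "usc_decomposition X (fibre X f ` topspace Y)"
  unfolding usc_decomposition_def
proof (intro ballI allI impI)
  fix A U assume A: "A \<in> fibre X f ` topspace Y" and U: "openin X U \<and> A \<subseteq> U"
  define V where "V = topspace Y - f ` (topspace X - U)"
  have "openin Y V"
    using closed U unfolding V_def closed_map_def by blast
  then have u: "openin X {x \<in> topspace X. f x \<in> V}"
    using openin_continuous_map_preimage[OF cont] by blast
  obtain y where y: "y \<in> topspace Y" "A = fibre X f y" using A by blast
  have "y \<notin> f ` (topspace X - U)"
    using U y unfolding fibre_def by auto
  then have "A \<subseteq> {x \<in> topspace X. f x \<in> V}"
    using y unfolding V_def fibre_def by auto
  moreover have "B \<subseteq> U" if B: "B \<in> fibre X f ` topspace Y" "B \<inter> {x \<in> topspace X. f x \<in> V} \<noteq> {}" for B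
  proof -
    obtain z where z: "B = fibre X f z" using B(1) by blast
    then have "z \<in> V" using B(2) unfolding fibre_def by auto
    then show ?thesis using z unfolding V_def fibre_def by auto
  qed
  ultimately show "\<exists>u. openin X u \<and> A \<subseteq> u \<and>
      (\<forall>B\<in>fibre X f ` topspace Y. B \<inter> u \<noteq> {} \<longrightarrow> B \<subseteq> U)"
    using u by blast
qed

lemma Metric_space_transport:
  assumes "Metric_space M d" and h: "inj_on h M"
  shows "Metric_space (h ` M) (\<lambda>D D'. d (inv_into M h D) (inv_into M h D'))"
proof -
  interpret Metric_space M d by fact
  have g: "inv_into M h D \<in> M" if "D \<in> h ` M" for D
    using that by (rule inv_into_into)
  have g_inj: "inj_on (inv_into M h) (h ` M)"
    by (rule inj_on_inv_into) simp
  show ?thesis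
  proof
    fix D D' D'' assume "D \<in> h ` M" "D' \<in> h ` M"
    then show "d (inv_into M h D) (inv_into M h D') = 0 \<longleftrightarrow> D = D'"
      using g g_inj by (auto dest: inj_onD)
    assume "D'' \<in> h ` M"
    then show "d (inv_into M h D) (inv_into M h D'') \<le>
        d (inv_into M h D) (inv_into M h D') + d (inv_into M h D') (inv_into M h D'')"
      using g \<open>D \<in> h ` M\<close> \<open>D' \<in> h ` M\<close> by (intro triangle) auto
  qed (simp_all add: commute)
qed

lemma homeomorphic_map_transport:
  assumes M: "Metric_space M d" and h: "inj_on h M"
  shows "homeomorphic_map (Metric_space.mtopology M d)
           (Metric_space.mtopology (h ` M) (\<lambda>D D'. d (inv_into M h D) (inv_into M h D'))) h"
proof -
  interpret Metric_space12 M d "h ` M" "\<lambda>D D'. d (inv_into M h D) (inv_into M h D')"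
    using M Metric_space_transport[OF M h] by (simp add: Metric_space12_def)
  show ?thesis
    by (rule isometry_imp_homeomorphic_map) (simp_all add: inv_into_f_f[OF h])
qed

lemma homeomorphic_map_unique_topology:
  assumes h1: "homeomorphic_map T T1 h" and h2: "homeomorphic_map T T2 h"
  shows "T1 = T2"
proof -
  have top: "topspace T1 = topspace T2"
    using h1 h2 homeomorphic_imp_surjective_map by metis
  have "openin T1 V \<longleftrightarrow> openin T2 V" if V: "V \<subseteq> topspace T1" for V
  proof -
    define W where "W = {x \<in> topspace T. h x \<in> V}"
    have "V = h ` W"
      using V homeomorphic_imp_surjective_map[OF h1] unfolding W_def by auto
    moreover have "W \<subseteq> topspace T" unfolding W_def by blast
    ultimately show ?thesis
      using homeomorphic_map_openness[OF h1] homeomorphic_map_openness[OF h2] by simp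
  qed
  then show ?thesis
    using top openin_subset by (metis topology_eq)
qed

lemma dendrite_homeomorphic:
  assumes D: "dendrite M d" and N: "Metric_space N e"
    and h: "homeomorphic_map (Metric_space.mtopology M d) (Metric_space.mtopology N e) h"
  shows "dendrite N e"
proof -
  let ?TM = "Metric_space.mtopology M d" and ?TN = "Metric_space.mtopology N e"
  have hs: "?TM homeomorphic_space ?TN" using h by (rule homeomorphic_map_imp_homeomorphic_space)
  have top: "topspace ?TM = M" "topspace ?TN = N"
    using D N unfolding dendrite_def by (simp_all add: Metric_space.topspace_mtopology)
  have no_circle: "\<not> (\<exists>S \<subseteq> N. subtopology ?TN S homeomorphic_space top_of_set (sphere (0::complex) 1))"
  proof
    assume "\<exists>S \<subseteq> N. subtopology ?TN S homeomorphic_space top_of_set (sphere (0::complex) 1)"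
    then obtain S where S: "subtopology ?TN S homeomorphic_space top_of_set (sphere (0::complex) 1)"
      by blast
    define S' where "S' = {x \<in> M. h x \<in> S}"
    have "homeomorphic_map (subtopology ?TM S') (subtopology ?TN S) h"
      by (rule homeomorphic_map_subtopologies_alt[OF h]) (simp add: S'_def top)
    then have "subtopology ?TM S' homeomorphic_space top_of_set (sphere (0::complex) 1)"
      using S homeomorphic_map_imp_homeomorphic_space homeomorphic_space_trans by blast
    moreover have "S' \<subseteq> M" unfolding S'_def by blast
    ultimately show False using D unfolding dendrite_def by blast
  qed
  have "N \<noteq> {}"
    using D top homeomorphic_imp_surjective_map[OF h] unfolding dendrite_def by auto
  then show ?thesis
    using D N no_circle homeomorphic_locally_connected_space[OF hs]
      homeomorphic_connected_space[OF hs] homeomorphic_compact_space[OF hs]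
    unfolding dendrite_def by blast
qed

theorem mainTheorem1:
  fixes X :: "'a topology" and M :: "'b set" and d :: "'b \<Rightarrow> 'b \<Rightarrow> real"
  assumes "zero_dimensional_space X" and "perfect_top_space X"
    and "compact_space X" and "t1_space X" and "topspace X \<noteq> {}"
    and "dendrite M d"
  shows "\<exists>f. continuous_map X (Metric_space.mtopology M d) f
           \<and> closed_map X (Metric_space.mtopology M d) f
           \<and> f ` topspace X = M
           \<and> (let h = (\<lambda>y. {x \<in> topspace X. f x = y});
                 Df = h ` M;
                 \<rho> = (\<lambda>D D'. d (inv_into M h D) (inv_into M h D'))
             in decomposition (topspace X) Df
                \<and> usc_decomposition X Df
                \<and> homeomorphic_map (Metric_space.mtopology M d) (decomp_topology X Df) h
                \<and> Metric_space Df \<rho>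
                \<and> decomp_topology X Df = Metric_space.mtopology Df \<rho>
                \<and> dendrite Df \<rho>)"
proof -
  have MS: "Metric_space M d" and "M \<noteq> {}" and cM: "compact_space (Metric_space.mtopology M d)"
    using assms(6) unfolding dendrite_def by blast+
  interpret Metric_space M d by (rule MS)
  obtain f where cont: "continuous_map X mtopology f" and onto: "f ` topspace X = M"
    using continuous_surjection_onto assms(1-5) cM \<open>M \<noteq> {}\<close> by metis
  have closed: "closed_map X mtopology f"
    using continuous_imp_closed_map[OF cont assms(3) Hausdorff_space_mtopology] .
  have onto': "f ` topspace X = topspace mtopology" using onto by simp
  define \<rho> where "\<rho> = (\<lambda>D D'. d (inv_into M (fibre X f) D) (inv_into M (fibre X f) D'))"
  have inj: "inj_on (fibre X f) M" using inj_on_fibre[OF onto'] by simp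
  have hom_decomp: "homeomorphic_map mtopology (decomp_topology X (fibre X f ` M)) (fibre X f)"
    using homeomorphic_map_fibre[OF continuous_closed_imp_quotient_map[OF cont closed onto']] by simp
  have hom_metric: "homeomorphic_map mtopology (Metric_space.mtopology (fibre X f ` M) \<rho>) (fibre X f)"
    unfolding \<rho>_def by (rule homeomorphic_map_transport[OF MS inj])
  have "Metric_space (fibre X f ` M) \<rho>"
    unfolding \<rho>_def by (rule Metric_space_transport[OF MS inj])
  moreover note decomposition_fibres[OF onto'] usc_decomposition_fibres[OF cont closed onto']
    homeomorphic_map_unique_topology[OF hom_decomp hom_metric]
    dendrite_homeomorphic[OF assms(6) _ hom_metric]
  (* The statement spells out fibre X f as a lambda term; unfolding fibre_def matches it. *)
  ultimately show ?thesis
    unfolding Let_def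
    using cont closed onto hom_decomp unfolding \<rho>_def fibre_def[abs_def]
    by (intro exI[of _ f] conjI) simp_all
qed

end
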